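(* Let $E$ be a finite set and $V \subset \mathbb R^E$ a linear subspace defining an oriented matroid $M$. If $F \subset E$ is an acyclic flat of $M$, then \[ Y_V \cap (\mathbb R_{\geq 0}^F \times \infty^{E \setminus F}) = \mathcal Y_V \cap (\mathbb R_{\geq 0}^F \times \infty^{E \setminus F}). \]
   Context: $\mathbb P^1_{\mathbb R} = \mathbb R \cup\{\infty\}$. $Y_V$ is the Zariski closure of $V$ in $(\mathbb P^1_{\mathbb R})^E$, and $\mathcal Y_V$ is the closure of $V \cap \mathbb R_{\geq 0}^E$ in $(\mathbb P^1_{\mathbb R})^E$ in the analytic topology. $\mathbb R_{\geq 0}^F \times \infty^{E\setminus F}$ is the set of points with nonnegative real coordinates on $F$ and $\infty$ on $E\setminus F$. Flats of $M$ are the zero sets $\{i : v_i = 0\}$ of $v \in V$; a flat $F$ is acyclic if some $v\in V$ has $v_i=0$ for $i\in F$ and $v_i>0$ for $i\notin F$. *)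

theory Defs
  imports "HOL-Analysis.Analysis"
begin

datatype P1 = Fin real | Inf

definition P1_topology :: "P1 topology" where
  "P1_topology = topology (\<lambda>U. open (Fin -` U) \<and>
      (Inf \<in> U \<longrightarrow> (\<exists>M::real. \<forall>x. M < \<bar>x\<bar> \<longrightarrow> Fin x \<in> U)))"

definition P1E_topology :: "('e \<Rightarrow> P1) topology" where
  "P1E_topology = product_topology (\<lambda>_. P1_topology) UNIV"

fun hcoord :: "P1 \<Rightarrow> real \<times> real" where
  "hcoord (Fin t) = (t, 1)"
| "hcoord Inf = (1, 0)"

text \<open>A polynomial in the variables x_i, y_i (i \<in> E) is a finitely supported coefficient
  function on exponent pairs (a,b), standing for the monomial prod_i x_i^(a i) y_i^(b i).\<close>
definition poly_eval :: "(('e::finite \<Rightarrow> nat) \<times> ('e \<Rightarrow> nat) \<Rightarrow> real) \<Rightarrow> ('e \<Rightarrow> P1) \<Rightarrow> real" where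
  "poly_eval c p = (\<Sum>m\<in>{m. c m \<noteq> 0}. c m *
      (\<Prod>i\<in>UNIV. fst (hcoord (p i)) ^ fst m i * snd (hcoord (p i)) ^ snd m i))"

definition multihomogeneous :: "(('e \<Rightarrow> nat) \<times> ('e \<Rightarrow> nat) \<Rightarrow> real) \<Rightarrow> bool" where
  "multihomogeneous c \<longleftrightarrow> finite {m. c m \<noteq> 0} \<and>
      (\<exists>d::'e \<Rightarrow> nat. \<forall>m. c m \<noteq> 0 \<longrightarrow> (\<forall>i. fst m i + snd m i = d i))"

text \<open>Zariski closure in (P^1_R)^E: closed sets are common zero sets of multihomogeneous
  polynomials, so the closure of S is the common zero set of all multihomogeneous
  polynomials vanishing on S.\<close>
definition zariski_closure :: "('e::finite \<Rightarrow> P1) set \<Rightarrow> ('e \<Rightarrow> P1) set" where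
  "zariski_closure S = {p. \<forall>c. multihomogeneous c \<and> (\<forall>q\<in>S. poly_eval c q = 0)
                                 \<longrightarrow> poly_eval c p = 0}"

definition embP :: "real ^ 'e \<Rightarrow> ('e::finite \<Rightarrow> P1)" where
  "embP v = (\<lambda>i. Fin (v $ i))"

definition Y_V :: "(real ^ 'e) set \<Rightarrow> ('e::finite \<Rightarrow> P1) set" where
  "Y_V V = zariski_closure (embP ` V)"

definition calY_V :: "(real ^ 'e) set \<Rightarrow> ('e::finite \<Rightarrow> P1) set" where
  "calY_V V = P1E_topology closure_of (embP ` (V \<inter> {v. \<forall>i. 0 \<le> v $ i}))"

definition nonneg_inf_box :: "'e set \<Rightarrow> ('e \<Rightarrow> P1) set" where
  "nonneg_inf_box F = {p. (\<forall>i\<in>F. \<exists>t\<ge>0. p i = Fin t) \<and> (\<forall>i. i \<notin> F \<longrightarrow> p i = Inf)}"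

definition is_flat :: "(real ^ 'e) set \<Rightarrow> 'e set \<Rightarrow> bool" where
  "is_flat V F \<longleftrightarrow> (\<exists>v\<in>V. F = {i. v $ i = 0})"

definition is_acyclic_flat :: "(real ^ 'e) set \<Rightarrow> 'e set \<Rightarrow> bool" where
  "is_acyclic_flat V F \<longleftrightarrow> is_flat V F \<and>
     (\<exists>v\<in>V. (\<forall>i\<in>F. v $ i = 0) \<and> (\<forall>i. i \<notin> F \<longrightarrow> 0 < v $ i))"

end

theory Submission
  imports Defs "HOL-Real_Asymp.Real_Asymp"
begin

text \<open>Zariski-closed subsets of \<open>(P1)^E\<close> are closed in the analytic topology: on a product of
  affine charts a multihomogeneous polynomial is a nowhere vanishing factor times a continuous
  function. This gives \<open>calY_V V \<subseteq> Y_V V\<close>. Conversely, let \<open>p \<in> Y_V V\<close> have finite nonnegative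
  coordinates \<open>u\<close> on \<open>F\<close> and infinite ones off \<open>F\<close>. Some \<open>v \<in> V\<close> restricts to \<open>u\<close> on
  \<open>F\<close>, since otherwise a linear form in the coordinates on \<open>F\<close>, vanishing on \<open>V\<close> but not at
  \<open>u\<close>, would homogenise to a polynomial separating \<open>p\<close> from \<open>V\<close>. Acyclicity of \<open>F\<close> provides
  \<open>w \<in> V\<close> vanishing on \<open>F\<close> and positive off \<open>F\<close>; then \<open>v + n w\<close> is eventually nonnegative
  and tends to \<open>p\<close>, so \<open>p \<in> calY_V V\<close>.\<close>

lemma openin_P1_topology:
  "openin P1_topology U \<longleftrightarrow>
     open (Fin -` U) \<and> (Inf \<in> U \<longrightarrow> (\<exists>M. \<forall>x. M < \<bar>x\<bar> \<longrightarrow> Fin x \<in> U))"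
proof -
  define P where "P U \<longleftrightarrow>
    open (Fin -` U) \<and> (Inf \<in> U \<longrightarrow> (\<exists>M. \<forall>x. M < \<bar>x\<bar> \<longrightarrow> Fin x \<in> U))" for U
  have "P (S \<inter> T)" if "P S" "P T" for S T
  proof -
    have "\<exists>M. \<forall>x. M < \<bar>x\<bar> \<longrightarrow> Fin x \<in> S \<inter> T" if "Inf \<in> S \<inter> T"
    proof -
      obtain M1 M2 where "\<forall>x. M1 < \<bar>x\<bar> \<longrightarrow> Fin x \<in> S" "\<forall>x. M2 < \<bar>x\<bar> \<longrightarrow> Fin x \<in> T"
        using \<open>P S\<close> \<open>P T\<close> \<open>Inf \<in> S \<inter> T\<close> by (auto simp: P_def)
      then show ?thesis
        by (intro exI[of _ "max M1 M2"]) auto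
    qed
    with that show ?thesis
      by (auto simp: P_def open_Int)
  qed
  moreover have "P (\<Union>K)" if "\<forall>S\<in>K. P S" for K
  proof -
    have "Fin -` \<Union>K = (\<Union>S\<in>K. Fin -` S)" by auto
    then have "open (Fin -` \<Union>K)"
      using that by (auto simp: P_def)
    moreover have "\<exists>M. \<forall>x. M < \<bar>x\<bar> \<longrightarrow> Fin x \<in> \<Union>K" if "Inf \<in> \<Union>K"
    proof -
      obtain S M where "S \<in> K" "\<forall>x. M < \<bar>x\<bar> \<longrightarrow> Fin x \<in> S"
        using \<open>Inf \<in> \<Union>K\<close> \<open>\<forall>S\<in>K. P S\<close> by (auto simp: P_def)
      then show ?thesis by blast
    qed
    ultimately show ?thesis by (simp add: P_def)
  qed
  ultimately have "istopology P"
    unfolding istopology_def by blast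
  then show ?thesis
    unfolding P1_topology_def P_def[abs_def] by simp
qed

lemma topspace_P1_topology [simp]: "topspace P1_topology = UNIV"
  using openin_subset[of P1_topology UNIV] by (auto simp: openin_P1_topology)

lemma topspace_P1E_topology [simp]: "topspace P1E_topology = UNIV"
  by (auto simp: P1E_topology_def)

lemma continuous_map_P1I:
  assumes "continuous_on UNIV (\<lambda>s. f (Fin s))"
    and "((\<lambda>s. f (Fin s)) \<longlongrightarrow> f Inf) at_top"
    and "((\<lambda>s. f (Fin s)) \<longlongrightarrow> f Inf) at_bot"
  shows "continuous_map P1_topology euclideanreal f"
  unfolding continuous_map_def
proof (intro conjI allI impI)
  fix U :: "real set"
  assume "openin euclideanreal U"
  then have U: "open U" by simp
  have "open (Fin -` (f -` U))"
    using assms(1) U by (simp add: open_vimage vimage_comp)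
  moreover have "\<exists>M. \<forall>x. M < \<bar>x\<bar> \<longrightarrow> f (Fin x) \<in> U" if Inf: "f Inf \<in> U"
  proof -
    obtain N1 where N1: "\<And>s. N1 \<le> s \<Longrightarrow> f (Fin s) \<in> U"
      using topological_tendstoD[OF assms(2) U Inf] by (auto simp: eventually_at_top_linorder)
    obtain N2 where N2: "\<And>s. s \<le> N2 \<Longrightarrow> f (Fin s) \<in> U"
      using topological_tendstoD[OF assms(3) U Inf] by (auto simp: eventually_at_bot_linorder)
    have "f (Fin x) \<in> U" if "max \<bar>N1\<bar> \<bar>N2\<bar> < \<bar>x\<bar>" for x
      using that N1[of x] N2[of x] by linarith
    then show ?thesis by blast
  qed
  ultimately show "openin P1_topology {x \<in> topspace P1_topology. f x \<in> U}"
    by (auto simp: openin_P1_topology vimage_def)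
qed auto

lemma limitin_P1_Inf:
  assumes "filterlim f at_top F"
  shows "limitin P1_topology (\<lambda>x. Fin (f x)) Inf F"
  unfolding limitin_def
proof (intro conjI allI impI)
  fix U assume "openin P1_topology U \<and> Inf \<in> U"
  then obtain M where M: "\<And>x. M < \<bar>x\<bar> \<Longrightarrow> Fin x \<in> U"
    by (auto simp: openin_P1_topology)
  show "\<forall>\<^sub>F x in F. Fin (f x) \<in> U"
    using filterlim_at_top_dense[THEN iffD1, OF assms, rule_format, of M]
    by eventually_elim (auto intro: M)
qed simp

text \<open>On \<open>chart_dom b\<close> the homogeneous coordinates of \<open>q\<close> are the nonzero multiple
  \<open>chart_scale b q\<close> of \<open>(chart_x b q, chart_y b q)\<close>, and \<open>chart_x b\<close>, \<open>chart_y b\<close> are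
  continuous on all of \<open>P1\<close>. Two charts are needed because, normalised, \<open>(s, 1)\<close> tends
  to \<open>(1, 0)\<close> as \<open>s \<rightarrow> \<infinity>\<close> but to \<open>(-1, 0)\<close> as \<open>s \<rightarrow> -\<infinity>\<close>.\<close>

fun chart_dom :: "bool \<Rightarrow> P1 set" where
  "chart_dom True = - {Fin 0}"
| "chart_dom False = range Fin"

fun chart_scale :: "bool \<Rightarrow> P1 \<Rightarrow> real" where
  "chart_scale True (Fin s) = (1 + s\<^sup>2) / s"
| "chart_scale False (Fin s) = 1 + s\<^sup>2"
| "chart_scale _ Inf = 1"

fun chart_x :: "bool \<Rightarrow> P1 \<Rightarrow> real" where
  "chart_x True (Fin s) = s\<^sup>2 / (1 + s\<^sup>2)"
| "chart_x False (Fin s) = s / (1 + s\<^sup>2)"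
| "chart_x True Inf = 1"
| "chart_x False Inf = 0"

fun chart_y :: "bool \<Rightarrow> P1 \<Rightarrow> real" where
  "chart_y True (Fin s) = s / (1 + s\<^sup>2)"
| "chart_y False (Fin s) = 1 / (1 + s\<^sup>2)"
| "chart_y _ Inf = 0"

lemma one_plus_square_nonzero: "1 + s\<^sup>2 \<noteq> (0::real)"
  by (metis add_pos_nonneg less_numeral_extra(1) zero_le_power2 less_irrefl)

lemma in_chart_dom: "q \<in> chart_dom (q = Inf)"
  by (cases q) auto

lemma hcoord_chart:
  assumes "q \<in> chart_dom b"
  shows "chart_scale b q \<noteq> 0"
    and "hcoord q = (chart_scale b q * chart_x b q, chart_scale b q * chart_y b q)"
proof -
  have "chart_scale b q \<noteq> 0 \<and>
      hcoord q = (chart_scale b q * chart_x b q, chart_scale b q * chart_y b q)"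
  proof (cases q)
    case (Fin s)
    have "1 + s\<^sup>2 \<noteq> 0" by (rule one_plus_square_nonzero)
    moreover have "b \<Longrightarrow> s \<noteq> 0" using assms Fin by auto
    ultimately show ?thesis
      using Fin by (cases b) (simp_all add: power2_eq_square)
  next
    case Inf
    then show ?thesis using assms by (cases b) auto
  qed
  then show "chart_scale b q \<noteq> 0"
    and "hcoord q = (chart_scale b q * chart_x b q, chart_scale b q * chart_y b q)"
    by blast+
qed

lemma openin_chart_dom: "openin P1_topology (chart_dom b)"
proof (cases b)
  case True
  have "Fin -` (- {Fin 0}) = - {0}" by auto
  then show ?thesis
    using True by (auto simp: openin_P1_topology open_Compl)
next
  case False
  have "Fin -` range Fin = UNIV" by auto
  then show ?thesis
    using False by (simp add: openin_P1_topology)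
qed

lemma continuous_map_chart_x: "continuous_map P1_topology euclideanreal (chart_x b)"
proof (rule continuous_map_P1I)
  show "continuous_on UNIV (\<lambda>s. chart_x b (Fin s))"
    by (cases b) (simp_all, (intro continuous_intros; simp add: one_plus_square_nonzero)+)
  show "((\<lambda>s. chart_x b (Fin s)) \<longlongrightarrow> chart_x b Inf) at_top"
    by (cases b) (simp_all, real_asymp+)
  show "((\<lambda>s. chart_x b (Fin s)) \<longlongrightarrow> chart_x b Inf) at_bot"
    by (cases b) (simp_all, real_asymp+)
qed

lemma continuous_map_chart_y: "continuous_map P1_topology euclideanreal (chart_y b)"
proof (rule continuous_map_P1I)
  show "continuous_on UNIV (\<lambda>s. chart_y b (Fin s))"
    by (cases b) (simp_all, (intro continuous_intros; simp add: one_plus_square_nonzero)+)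
  show "((\<lambda>s. chart_y b (Fin s)) \<longlongrightarrow> chart_y b Inf) at_top"
    by (cases b) (simp_all, real_asymp+)
  show "((\<lambda>s. chart_y b (Fin s)) \<longlongrightarrow> chart_y b Inf) at_bot"
    by (cases b) (simp_all, real_asymp+)
qed

definition chart_poly_eval ::
    "('e::finite \<Rightarrow> bool) \<Rightarrow> (('e \<Rightarrow> nat) \<times> ('e \<Rightarrow> nat) \<Rightarrow> real) \<Rightarrow> ('e \<Rightarrow> P1) \<Rightarrow> real" where
  "chart_poly_eval B c q = (\<Sum>m\<in>{m. c m \<noteq> 0}. c m *
      (\<Prod>i\<in>UNIV. chart_x (B i) (q i) ^ fst m i * chart_y (B i) (q i) ^ snd m i))"

lemma poly_eval_chart_factor:
  assumes deg: "\<And>m i. c m \<noteq> 0 \<Longrightarrow> fst m i + snd m i = d i"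
    and q: "\<And>i. q i \<in> chart_dom (B i)"
  shows "poly_eval c q = (\<Prod>i\<in>UNIV. chart_scale (B i) (q i) ^ d i) * chart_poly_eval B c q"
  unfolding poly_eval_def chart_poly_eval_def sum_distrib_left
proof (rule sum.cong[OF refl])
  fix m assume "m \<in> {m. c m \<noteq> 0}"
  then have dm: "fst m i + snd m i = d i" for i
    using deg by auto
  have "fst (hcoord (q i)) ^ fst m i * snd (hcoord (q i)) ^ snd m i =
      chart_scale (B i) (q i) ^ d i *
      (chart_x (B i) (q i) ^ fst m i * chart_y (B i) (q i) ^ snd m i)" for i
    by (simp add: hcoord_chart(2)[OF q] dm[symmetric] power_add algebra_simps)
  then show "c m * (\<Prod>i\<in>UNIV. fst (hcoord (q i)) ^ fst m i * snd (hcoord (q i)) ^ snd m i) =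
      (\<Prod>i\<in>UNIV. chart_scale (B i) (q i) ^ d i) *
      (c m * (\<Prod>i\<in>UNIV. chart_x (B i) (q i) ^ fst m i * chart_y (B i) (q i) ^ snd m i))"
    by (simp add: prod.distrib algebra_simps)
qed

lemma continuous_map_P1E_coordinate:
  assumes "continuous_map P1_topology euclideanreal f"
  shows "continuous_map P1E_topology euclideanreal (\<lambda>q. f (q i))"
  using continuous_map_compose[OF continuous_map_product_projection[of i UNIV "\<lambda>_. P1_topology"] assms]
  by (simp add: P1E_topology_def o_def)

lemma continuous_map_chart_poly_eval:
  assumes "finite {m. c m \<noteq> 0}"
  shows "continuous_map P1E_topology euclideanreal (chart_poly_eval B c)"
  unfolding chart_poly_eval_def
  by (intro continuous_map_sum continuous_map_real_mult continuous_map_prod continuous_map_real_pow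
      continuous_map_canonical_const continuous_map_P1E_coordinate continuous_map_chart_x
      continuous_map_chart_y assms) auto

lemma openin_poly_eval_nonzero:
  assumes "multihomogeneous c"
  shows "openin P1E_topology {q. poly_eval c q \<noteq> 0}"
proof (subst openin_subopen, intro ballI)
  obtain d where deg: "\<And>m i. c m \<noteq> 0 \<Longrightarrow> fst m i + snd m i = d i"
    and fin: "finite {m. c m \<noteq> 0}"
    using assms unfolding multihomogeneous_def by blast
  fix p assume "p \<in> {q. poly_eval c q \<noteq> 0}"
  define B where "B i \<longleftrightarrow> p i = Inf" for i
  define T where "T = (\<Pi>\<^sub>E i\<in>UNIV. chart_dom (B i)) \<inter> {q. chart_poly_eval B c q \<noteq> 0}"
  have "openin P1E_topology (\<Pi>\<^sub>E i\<in>UNIV. chart_dom (B i))"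
    unfolding P1E_topology_def by (rule product_topology_basis) (auto simp: openin_chart_dom)
  moreover have "openin P1E_topology {q. chart_poly_eval B c q \<noteq> 0}"
    using openin_continuous_map_preimage[OF continuous_map_chart_poly_eval[OF fin, of B], of "- {0}"]
    by (simp add: open_Compl)
  ultimately have "openin P1E_topology T"
    unfolding T_def by (rule openin_Int)
  moreover have "p \<in> T"
    using \<open>p \<in> {q. poly_eval c q \<noteq> 0}\<close> poly_eval_chart_factor[where c = c and d = d and q = p and B = B, OF deg]
    by (auto simp: T_def B_def in_chart_dom)
  moreover have "T \<subseteq> {q. poly_eval c q \<noteq> 0}"
  proof
    fix q assume "q \<in> T"
    then have dom: "\<And>i. q i \<in> chart_dom (B i)" and "chart_poly_eval B c q \<noteq> 0"
      by (auto simp: T_def)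
    moreover have "(\<Prod>i\<in>UNIV. chart_scale (B i) (q i) ^ d i) \<noteq> 0"
      using hcoord_chart(1)[OF dom] by simp
    ultimately show "q \<in> {q. poly_eval c q \<noteq> 0}"
      using poly_eval_chart_factor[where c = c and d = d, OF deg dom] by simp
  qed
  ultimately show "\<exists>T. openin P1E_topology T \<and> p \<in> T \<and> T \<subseteq> {q. poly_eval c q \<noteq> 0}"
    by blast
qed

lemma closure_of_subset_zariski_closure: "P1E_topology closure_of S \<subseteq> zariski_closure S"
  unfolding zariski_closure_def
proof (intro subsetI CollectI allI impI)
  fix p c
  assume p: "p \<in> P1E_topology closure_of S"
    and c: "multihomogeneous c \<and> (\<forall>q\<in>S. poly_eval c q = 0)"
  have "closedin P1E_topology {q. poly_eval c q = 0}"
    using openin_poly_eval_nonzero[of c] c by (simp add: closedin_def Compl_eq_Diff_UNIV[symmetric] Collect_neg_eq)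
  moreover have "S \<subseteq> {q. poly_eval c q = 0}"
    using c by blast
  ultimately show "poly_eval c p = 0"
    using closure_of_minimal p by blast
qed

definition linear_monomial :: "'e set \<Rightarrow> 'e \<Rightarrow> ('e \<Rightarrow> nat) \<times> ('e \<Rightarrow> nat)" where
  "linear_monomial F i = ((\<lambda>j. if j = i then 1 else 0), (\<lambda>j. if j \<in> F \<and> j \<noteq> i then 1 else 0))"

text \<open>The coefficients of the homogenisation \<open>\<Sum>i\<in>F. a i * x i * (\<Prod>j\<in>F - {i}. y j)\<close> of the
  linear form \<open>\<Sum>i\<in>F. a i * x i\<close>.\<close>

definition linear_form :: "'e set \<Rightarrow> ('e \<Rightarrow> real) \<Rightarrow> ('e \<Rightarrow> nat) \<times> ('e \<Rightarrow> nat) \<Rightarrow> real" where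
  "linear_form F a m = (\<Sum>k\<in>F. if m = linear_monomial F k then a k else 0)"

lemma linear_monomial_eq_iff [simp]: "linear_monomial F i = linear_monomial F k \<longleftrightarrow> i = k"
proof
  assume "linear_monomial F i = linear_monomial F k"
  then have "fst (linear_monomial F i) i = fst (linear_monomial F k) i" by simp
  then show "i = k" by (auto simp: linear_monomial_def split: if_splits)
qed simp

lemma linear_form_support: "{m. linear_form F a m \<noteq> 0} \<subseteq> linear_monomial F ` F"
proof
  fix m assume m: "m \<in> {m. linear_form F a m \<noteq> 0}"
  show "m \<in> linear_monomial F ` F"
  proof (rule ccontr)
    assume "m \<notin> linear_monomial F ` F"
    then have "linear_form F a m = 0"
      unfolding linear_form_def by (intro sum.neutral) auto
    with m show False by simp
  qed
qed

lemma linear_form_linear_monomial: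
  assumes "finite F" "i \<in> F"
  shows "linear_form F a (linear_monomial F i) = a i"
proof -
  have "linear_form F a (linear_monomial F i) = (\<Sum>k\<in>F. if i = k then a k else 0)"
    unfolding linear_form_def by simp
  also have "\<dots> = a i"
    using assms by simp
  finally show ?thesis .
qed

lemma multihomogeneous_linear_form:
  assumes "finite F"
  shows "multihomogeneous (linear_form F a)"
  unfolding multihomogeneous_def
proof
  show "finite {m. linear_form F a m \<noteq> 0}"
    using finite_subset[OF linear_form_support finite_imageI[OF assms]] .
  show "\<exists>d. \<forall>m. linear_form F a m \<noteq> 0 \<longrightarrow> (\<forall>i. fst m i + snd m i = d i)"
  proof (intro exI[of _ "\<lambda>j. if j \<in> F then 1 else 0"] allI impI)
    fix m i assume "linear_form F a m \<noteq> 0"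
    then obtain k where "k \<in> F" "m = linear_monomial F k"
      using linear_form_support by blast
    then show "fst m i + snd m i = (if i \<in> F then 1 else 0)"
      by (auto simp: linear_monomial_def)
  qed
qed

lemma poly_eval_linear_form:
  fixes F :: "'e::finite set"
  assumes q: "\<And>j. j \<in> F \<Longrightarrow> q j = Fin (g j)"
  shows "poly_eval (linear_form F a) q = (\<Sum>i\<in>F. a i * g i)"
proof -
  define mon where
    "mon m = (\<Prod>i\<in>UNIV. fst (hcoord (q i)) ^ fst m i * snd (hcoord (q i)) ^ snd m i)" for m
  have mon: "mon (linear_monomial F i) = g i" if "i \<in> F" for i
  proof -
    have "mon (linear_monomial F i) = (\<Prod>j\<in>UNIV. if j = i then g i else 1)"
      unfolding mon_def
    proof (rule prod.cong[OF refl])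
      fix j
      show "fst (hcoord (q j)) ^ fst (linear_monomial F i) j * snd (hcoord (q j)) ^ snd (linear_monomial F i) j =
          (if j = i then g i else 1)"
        using q that by (cases "j = i"; cases "j \<in> F") (auto simp: linear_monomial_def)
    qed
    then show ?thesis by simp
  qed
  have "poly_eval (linear_form F a) q = (\<Sum>m\<in>{m. linear_form F a m \<noteq> 0}. linear_form F a m * mon m)"
    unfolding poly_eval_def mon_def ..
  also have "\<dots> = (\<Sum>m\<in>linear_monomial F ` F. linear_form F a m * mon m)"
    by (rule sum.mono_neutral_left) (use linear_form_support in auto)
  also have "\<dots> = (\<Sum>i\<in>F. linear_form F a (linear_monomial F i) * mon (linear_monomial F i))"
    by (rule sum.reindex_cong[of "linear_monomial F"]) (auto simp: inj_on_def)
  also have "\<dots> = (\<Sum>i\<in>F. a i * g i)"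
    by (rule sum.cong[OF refl]) (simp add: linear_form_linear_monomial mon)
  finally show ?thesis .
qed

lemma inner_restrict_vec:
  fixes z :: "real ^ 'e::finite"
  shows "z \<bullet> (\<chi> i. if i \<in> F then g i else 0) = (\<Sum>i\<in>F. z $ i * g i)"
  by (simp add: inner_vec_def if_distrib sum.If_cases)

text \<open>If no vector of \<open>V\<close> restricts to \<open>u\<close> on \<open>F\<close>, the component of \<open>u\<close> orthogonal to the
  restrictions of \<open>V\<close> gives a linear form on \<open>F\<close> vanishing on \<open>V\<close> but not at \<open>u\<close>.\<close>

lemma linear_form_separating_restriction:
  fixes V :: "(real ^ 'e::finite) set"
  assumes V: "subspace V" and not_restr: "\<not> (\<exists>v\<in>V. \<forall>i\<in>F. v $ i = u i)"
  obtains z where "\<And>v. v \<in> V \<Longrightarrow> (\<Sum>i\<in>F. z $ i * v $ i) = 0" and "(\<Sum>i\<in>F. z $ i * u i) \<noteq> 0"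
proof -
  define restr :: "real ^ 'e \<Rightarrow> real ^ 'e" where "restr x = (\<chi> i. if i \<in> F then x $ i else 0)" for x
  define u' :: "real ^ 'e" where "u' = (\<chi> i. if i \<in> F then u i else 0)"
  define W where "W = restr ` V"
  have "linear restr"
    by (rule linearI) (auto simp: restr_def vec_eq_iff)
  then have span_W: "span W = W"
    unfolding W_def using V by (simp add: linear_subspace_image)
  have "u' \<notin> W"
  proof
    assume "u' \<in> W"
    then obtain v where "v \<in> V" "u' = restr v" unfolding W_def by blast
    then have "\<forall>i\<in>F. v $ i = u i" by (auto simp: u'_def restr_def vec_eq_iff) metis
    with not_restr \<open>v \<in> V\<close> show False by blast
  qed
  obtain y z where y: "y \<in> span W" and z: "\<And>w. w \<in> span W \<Longrightarrow> orthogonal z w" and u': "u' = y + z"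
    using orthogonal_subspace_decomp_exists[of W u'] by blast
  have "z \<noteq> 0" using u' y span_W \<open>u' \<notin> W\<close> by auto
  have "z \<bullet> u' = z \<bullet> z"
    using z[OF y] u' by (simp add: orthogonal_def inner_add_right)
  with \<open>z \<noteq> 0\<close> have "(\<Sum>i\<in>F. z $ i * u i) \<noteq> 0"
    by (simp add: u'_def inner_restrict_vec)
  moreover have "(\<Sum>i\<in>F. z $ i * v $ i) = 0" if "v \<in> V" for v
  proof -
    have "restr v \<in> span W"
      unfolding span_W using that by (simp add: W_def)
    then have "z \<bullet> restr v = 0"
      using z by (simp add: orthogonal_def)
    then show ?thesis
      by (simp add: restr_def inner_restrict_vec)
  qed
  ultimately show ?thesis using that by blast
qed

lemma Y_V_restriction_liftable:
  fixes V :: "(real ^ 'e::finite) set"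
  assumes V: "subspace V" and p: "p \<in> Y_V V" and p_fin: "\<forall>i\<in>F. p i = Fin (u i)"
  shows "\<exists>v\<in>V. \<forall>i\<in>F. v $ i = u i"
proof (rule ccontr)
  assume "\<not> (\<exists>v\<in>V. \<forall>i\<in>F. v $ i = u i)"
  then obtain z where z_V: "\<And>v. v \<in> V \<Longrightarrow> (\<Sum>i\<in>F. z $ i * v $ i) = 0"
    and z_u: "(\<Sum>i\<in>F. z $ i * u i) \<noteq> 0"
    using linear_form_separating_restriction V by blast
  have "\<forall>q\<in>embP ` V. poly_eval (linear_form F (($) z)) q = 0"
    using z_V by (auto simp: poly_eval_linear_form embP_def)
  then have "poly_eval (linear_form F (($) z)) p = 0"
    using p multihomogeneous_linear_form[OF finite] unfolding Y_V_def zariski_closure_def by blast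
  with z_u show False
    using p_fin by (simp add: poly_eval_linear_form)
qed

lemma limitin_in_closure_of:
  assumes "limitin X f l F" and "\<forall>\<^sub>F x in F. f x \<in> S" and "F \<noteq> bot"
  shows "l \<in> X closure_of S"
  unfolding in_closure_of
proof (intro conjI allI impI)
  show "l \<in> topspace X"
    using assms(1) by (rule limitin_topspace)
  fix T assume "l \<in> T \<and> openin X T"
  then have "\<forall>\<^sub>F x in F. f x \<in> S \<and> f x \<in> T"
    using eventually_conj[OF assms(2) limitinD[OF assms(1)]] by blast
  then show "\<exists>y. y \<in> S \<and> y \<in> T"
    using eventually_happens' assms(3) by blast
qed

lemma calY_V_limit_point:
  fixes V :: "(real ^ 'e::finite) set"
  assumes V: "subspace V" and "v \<in> V" and "w \<in> V"
    and v_nonneg: "\<forall>i\<in>F. 0 \<le> v $ i"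
    and w_zero: "\<forall>i\<in>F. w $ i = 0" and w_pos: "\<forall>i. i \<notin> F \<longrightarrow> 0 < w $ i"
  shows "(\<lambda>i. if i \<in> F then Fin (v $ i) else Inf) \<in> calY_V V"
proof -
  define f where "f n = embP (v + real n *\<^sub>R w)" for n :: nat
  have to_top: "filterlim (\<lambda>n. v $ i + real n * w $ i) at_top sequentially" if "i \<notin> F" for i
    using w_pos that
    by (intro filterlim_tendsto_add_at_top[OF tendsto_const]
        filterlim_at_top_mult_tendsto_pos[OF tendsto_const _ filterlim_real_sequentially]) auto
  have "limitin P1_topology (\<lambda>n. f n i) (if i \<in> F then Fin (v $ i) else Inf) sequentially" for i
  proof (cases "i \<in> F")
    case True
    then show ?thesis
      using w_zero by (simp add: f_def embP_def)
  next
    case False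
    then show ?thesis
      using limitin_P1_Inf[OF to_top[OF False]] by (simp add: f_def embP_def)
  qed
  then have lim: "limitin P1E_topology f (\<lambda>i. if i \<in> F then Fin (v $ i) else Inf) sequentially"
    by (simp add: P1E_topology_def limitin_componentwise)
  have "\<forall>\<^sub>F n in sequentially. \<forall>i. i \<notin> F \<longrightarrow> 0 \<le> v $ i + real n * w $ i"
    using to_top by (intro eventually_all_finite) (auto simp: filterlim_at_top)
  then have "\<forall>\<^sub>F n in sequentially. f n \<in> embP ` (V \<inter> {v. \<forall>i. 0 \<le> v $ i})"
  proof eventually_elim
    case (elim n)
    have "v + real n *\<^sub>R w \<in> V"
      using V \<open>v \<in> V\<close> \<open>w \<in> V\<close> by (simp add: subspace_add subspace_scale)
    moreover have "0 \<le> (v + real n *\<^sub>R w) $ i" for i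
      using elim v_nonneg w_zero by (cases "i \<in> F") auto
    ultimately show ?case
      unfolding f_def by blast
  qed
  with lim show ?thesis
    unfolding calY_V_def by (rule limitin_in_closure_of) simp
qed

theorem lemma3p3:
  fixes V :: "(real ^ 'e::finite) set" and F :: "'e set"
  assumes "subspace V"
    and "is_acyclic_flat V F"
  shows "Y_V V \<inter> nonneg_inf_box F = calY_V V \<inter> nonneg_inf_box F"
proof
  have "calY_V V \<subseteq> zariski_closure (embP ` (V \<inter> {v. \<forall>i. 0 \<le> v $ i}))"
    unfolding calY_V_def by (rule closure_of_subset_zariski_closure)
  also have "\<dots> \<subseteq> Y_V V"
    unfolding Y_V_def zariski_closure_def by blast
  finally show "calY_V V \<inter> nonneg_inf_box F \<subseteq> Y_V V \<inter> nonneg_inf_box F"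
    by blast
next
  obtain w where w: "w \<in> V" "\<forall>i\<in>F. w $ i = 0" "\<forall>i. i \<notin> F \<longrightarrow> 0 < w $ i"
    using assms(2) unfolding is_acyclic_flat_def by blast
  show "Y_V V \<inter> nonneg_inf_box F \<subseteq> calY_V V \<inter> nonneg_inf_box F"
  proof
    fix p assume p: "p \<in> Y_V V \<inter> nonneg_inf_box F"
    define u where "u i = (case p i of Fin t \<Rightarrow> t | Inf \<Rightarrow> 0)" for i
    have u: "\<forall>i\<in>F. p i = Fin (u i) \<and> 0 \<le> u i" and p_Inf: "\<forall>i. i \<notin> F \<longrightarrow> p i = Inf"
      using p unfolding nonneg_inf_box_def u_def by auto
    then obtain v where v: "v \<in> V" "\<forall>i\<in>F. v $ i = u i"
      using Y_V_restriction_liftable[OF assms(1)] p by blast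
    have "p = (\<lambda>i. if i \<in> F then Fin (v $ i) else Inf)"
      using u v p_Inf by auto
    then have "p \<in> calY_V V"
      using calY_V_limit_point[OF assms(1) v(1) w(1)] u v w by simp
    with p show "p \<in> calY_V V \<inter> nonneg_inf_box F"
      by blast
  qed
qed

end
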